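(* Let $(A,\{m_k\}_{k\ge0})$ be a $\mathbb Z_2$-graded filtered $A_\infty$-algebra over $\Lambda_0$ with a unit $\mathbf 1$, free of finite rank with a basis consisting of $\mathbf 1$, a finite set $\{X_e\}_{e\in E}$ of odd-degree elements, a set $\{X_f\}_{f\in F}$ of even-degree elements, and possibly further odd-degree elements (e.g. $A$ is the Floer cochain complex of a compact immersed Lagrangian, with $X_e$ the odd-degree immersed generators). Let $K=\Lambda_0\langle\langle x_e:e\in E\rangle\rangle$ be the algebra of noncommutative formal power series in variables $x_e$ of degree $0$, and extend the $A_\infty$-operations to $K\widehat\otimes_{\Lambda_0}A$ by the rule $m_k(f_1Y_1,\dots,f_kY_k)=f_k\cdots f_1\,m_k(Y_1,\dots,Y_k)$ for $f_j\in K$. Put $b=\sum_{e\in E}x_eX_e$ and write $$m_0^b:=\sum_{k\ge0}m_k(b,\dots,b)=W\cdot\mathbf 1+\sum_{f\in F}P_f\,X_f\qquad(W,P_f\in K).$$ Let $\mathcal A=K/\langle P_f:f\in F\rangle$, the quotient by the completed two-sided ideal generated by the $P_f$. Then the image of $W$ in $\mathcal A$ is central: $W\cdot x_e=x_e\cdot W$ in $\mathcal A$ for every $e\in E$.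
   Context: The $A_\infty$-operations $m_k$ have degree one with respect to the shifted grading $|v|'=|v|-1$ and satisfy the $A_\infty$-equations $\sum_{k_1+k_2=n+1}\sum_i(-1)^{\sum_{j<i}|v_j|'}m_{k_1}(v_1,\dots,m_{k_2}(v_i,\dots,v_{i+k_2-1}),\dots,v_n)=0$. An element $\mathbf 1$ of degree $0$ is a unit if $m_2(\mathbf 1,v)=v$, $(-1)^{|w|}m_2(w,\mathbf 1)=w$ for all $v,w$, and $m_k(\dots,\mathbf 1,\dots)=0$ for $k\neq2$. Since $b$ has odd degree, $m_0^b$ has even degree, so its expansion in the basis involves only $\mathbf 1$ and the even elements $X_f$. The sum defining $m_0^b$ converges in $K\widehat\otimes A$ because $m_k(b,\dots,b)$ is homogeneous of degree $k$ in the variables $x_e$. The completed two-sided ideal $\langle P_f\rangle$ is the closure of the two-sided ideal generated by the $P_f$. *)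

theory Defs
  imports Complex_Main "HOL-Library.Function_Algebras"
begin

text \<open>An element \<open>\<Sum> a_i T^{\<lambda>_i}\<close> (with \<open>\<lambda>_i \<ge> 0\<close>, \<open>\<lambda>_i \<rightarrow> \<infinity>\<close>) is represented by its
  coefficient function \<open>a :: real \<Rightarrow> 'k\<close> (\<open>a \<lambda>\<close> = coefficient of \<open>T^\<lambda>\<close>).
  Addition, zero and negation are pointwise (Function_Algebras).\<close>

definition novikov0 :: "(real \<Rightarrow> 'k::field) set" where
  "novikov0 = {a. (\<forall>t<0. a t = 0) \<and> (\<forall>C. finite {t. t \<le> C \<and> a t \<noteq> 0})}"

definition nov_one :: "real \<Rightarrow> 'k::field" where
  "nov_one = (\<lambda>t. if t = 0 then 1 else 0)"

definition nov_mult :: "(real \<Rightarrow> 'k::field) \<Rightarrow> (real \<Rightarrow> 'k) \<Rightarrow> (real \<Rightarrow> 'k)" where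
  "nov_mult a b = (\<lambda>t. \<Sum>s\<in>{s. s \<le> t \<and> a s \<noteq> 0}. a s * b (t - s))"

definition nov_sign :: "nat \<Rightarrow> (real \<Rightarrow> 'k::field) \<Rightarrow> (real \<Rightarrow> 'k)" where
  "nov_sign s a = (if even s then a else - a)"

text \<open>A series is a function from words to \<Lambda>_0; the word \<open>[a1,...,an]\<close> stands for the
  monomial \<open>x_{a1} x_{a2} ... x_{an}\<close>.  Addition, zero, negation are pointwise.\<close>

type_synonym ('e, 'k) ncseries = "'e list \<Rightarrow> real \<Rightarrow> 'k"

definition nc_series :: "('e, 'k::field) ncseries set" where
  "nc_series = {f. \<forall>w. f w \<in> novikov0}"

definition nc_mult :: "('e, 'k::field) ncseries \<Rightarrow> ('e, 'k) ncseries \<Rightarrow> ('e, 'k) ncseries" where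
  "nc_mult f g = (\<lambda>w. \<Sum>i\<le>length w. nov_mult (f (take i w)) (g (drop i w)))"

definition nc_const :: "(real \<Rightarrow> 'k::field) \<Rightarrow> ('e, 'k) ncseries" where
  "nc_const c = (\<lambda>w. if w = [] then c else 0)"

definition nc_one :: "('e, 'k::field) ncseries" where
  "nc_one = nc_const nov_one"

definition nc_var :: "'e \<Rightarrow> ('e, 'k::field) ncseries" where
  "nc_var e = (\<lambda>w. if w = [e] then nov_one else 0)"

definition nc_prod :: "('e, 'k::field) ncseries list \<Rightarrow> ('e, 'k) ncseries" where
  "nc_prod fs = foldr nc_mult fs nc_one"

inductive_set nc_ideal :: "('e, 'k::field) ncseries set \<Rightarrow> ('e, 'k) ncseries set"
  for S :: "('e, 'k) ncseries set" where
  gen: "s \<in> S \<Longrightarrow> s \<in> nc_ideal S"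
| zero: "0 \<in> nc_ideal S"
| add: "a \<in> nc_ideal S \<Longrightarrow> b \<in> nc_ideal S \<Longrightarrow> a + b \<in> nc_ideal S"
| lmult: "a \<in> nc_ideal S \<Longrightarrow> g \<in> nc_series \<Longrightarrow> nc_mult g a \<in> nc_ideal S"
| rmult: "a \<in> nc_ideal S \<Longrightarrow> g \<in> nc_series \<Longrightarrow> nc_mult a g \<in> nc_ideal S"

text \<open>Closure in the formal-power-series (x-adic) topology of K.\<close>
definition nc_closure :: "('e, 'k::field) ncseries set \<Rightarrow> ('e, 'k) ncseries set" where
  "nc_closure I = {g \<in> nc_series. \<forall>N. \<exists>h\<in>I. \<forall>w. length w < N \<longrightarrow> g w = h w}"

definition completed_ideal :: "('e, 'k::field) ncseries set \<Rightarrow> ('e, 'k) ncseries set" where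
  "completed_ideal S = nc_closure (nc_ideal S)"

text \<open>\<open>A\<close> is free over \<Lambda>_0 with finite basis indexed by the finite type \<open>'i\<close>;
  \<open>isodd i\<close> says the basis element \<open>Y_i\<close> has odd degree.  The operation \<open>m_k\<close> is encoded
  by its structure constants: \<open>m [i_1,...,i_k] j \<in> \<Lambda>_0\<close> is the coefficient of \<open>Y_j\<close> in
  \<open>m_k(Y_{i_1},...,Y_{i_k})\<close>; \<open>m_k\<close> is the \<Lambda>_0-multilinear extension.\<close>

text \<open>shifted degree \<open>|Y_i|' = |Y_i| - 1\<close> mod 2\<close>
definition sdeg :: "('i \<Rightarrow> bool) \<Rightarrow> 'i \<Rightarrow> nat" where
  "sdeg isodd i = (if isodd i then 0 else 1)"

definition structure_constants_in_novikov :: "('i list \<Rightarrow> 'i \<Rightarrow> real \<Rightarrow> 'k::field) \<Rightarrow> bool" where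
  "structure_constants_in_novikov m \<longleftrightarrow> (\<forall>is j. m is j \<in> novikov0)"

definition degree_one :: "('i \<Rightarrow> bool) \<Rightarrow> ('i list \<Rightarrow> 'i \<Rightarrow> real \<Rightarrow> 'k::field) \<Rightarrow> bool" where
  "degree_one isodd m \<longleftrightarrow>
     (\<forall>is j. m is j \<noteq> 0 \<longrightarrow> even (sdeg isodd j + (\<Sum>i\<leftarrow>is. sdeg isodd i) + 1))"

text \<open>The A-infinity equations evaluated on basis elements \<open>v_1..v_n\<close> (list \<open>vs\<close>), coefficient
  of the output basis element \<open>Y_j\<close>: the inner operation \<open>m_{k2}\<close> acts on \<open>vs[p..p+k2-1]\<close>
  (0-based), sign \<open>(-1)^{\<Sum>_{q<p} |v_q|'}\<close>, and \<open>k1 = n - k2 + 1\<close>.\<close>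
definition ainf_equations :: "('i::finite \<Rightarrow> bool) \<Rightarrow> ('i list \<Rightarrow> 'i \<Rightarrow> real \<Rightarrow> 'k::field) \<Rightarrow> bool" where
  "ainf_equations isodd m \<longleftrightarrow>
     (\<forall>vs j. (\<Sum>k2\<in>{0..length vs}. \<Sum>p\<in>{0..length vs - k2}.
        nov_sign (\<Sum>q<p. sdeg isodd (vs ! q))
          (\<Sum>l\<in>UNIV. nov_mult (m (take k2 (drop p vs)) l) (m (take p vs @ [l] @ drop (p + k2) vs) j)))
      = 0)"

text \<open>Filtration: with \<Lambda>_0-valued structure constants all \<open>m_k\<close> preserve the energy filtration;
  in addition (FOOO) the curvature \<open>m_0(1)\<close> has strictly positive energy.\<close>
definition curvature_positive_energy :: "('i list \<Rightarrow> 'i \<Rightarrow> real \<Rightarrow> 'k::field) \<Rightarrow> bool" where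
  "curvature_positive_energy m \<longleftrightarrow> (\<forall>j. m [] j 0 = 0)"

definition Z2_filtered_Ainf_algebra ::
  "('i::finite \<Rightarrow> bool) \<Rightarrow> ('i list \<Rightarrow> 'i \<Rightarrow> real \<Rightarrow> 'k::field) \<Rightarrow> bool" where
  "Z2_filtered_Ainf_algebra isodd m \<longleftrightarrow>
     structure_constants_in_novikov m \<and> degree_one isodd m \<and> ainf_equations isodd m
     \<and> curvature_positive_energy m"

definition ainf_unit :: "('i \<Rightarrow> bool) \<Rightarrow> ('i list \<Rightarrow> 'i \<Rightarrow> real \<Rightarrow> 'k::field) \<Rightarrow> 'i \<Rightarrow> bool" where
  "ainf_unit isodd m u \<longleftrightarrow>
     \<not> isodd u \<and>
     (\<forall>i j. m [u, i] j = (if i = j then nov_one else 0)) \<and>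
     (\<forall>i j. nov_sign (if isodd i then 1 else 0) (m [i, u] j) = (if i = j then nov_one else 0)) \<and>
     (\<forall>is j. length is \<noteq> 2 \<longrightarrow> u \<in> set is \<longrightarrow> m is j = 0)"

definition basis_shape :: "('i \<Rightarrow> bool) \<Rightarrow> 'i \<Rightarrow> ('e \<Rightarrow> 'i) \<Rightarrow> ('f \<Rightarrow> 'i) \<Rightarrow> bool" where
  "basis_shape isodd u Xe Xf \<longleftrightarrow>
     inj Xe \<and> inj Xf \<and> u \<notin> range Xe \<and> u \<notin> range Xf \<and> range Xe \<inter> range Xf = {} \<and>
     (\<forall>e. isodd (Xe e)) \<and> (\<forall>f. \<not> isodd (Xf f)) \<and>
     (\<forall>i. i \<noteq> u \<and> i \<notin> range Xe \<and> i \<notin> range Xf \<longrightarrow> isodd i)"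

text \<open>Elements of \<open>K \<hat>\<otimes> A\<close> (A free of finite rank) are \<open>'i \<Rightarrow> K\<close> (coefficient of each basis
  element).  The rule \<open>m_k(f_1 Y_1,...,f_k Y_k) = f_k\<cdots>f_1 m_k(Y_1,...,Y_k)\<close> extended
  multilinearly: coefficient of \<open>Y_j\<close> in \<open>m_k(g_1,...,g_k)\<close>.\<close>
definition ext_m :: "('i::finite list \<Rightarrow> 'i \<Rightarrow> real \<Rightarrow> 'k::field) \<Rightarrow> ('i \<Rightarrow> ('e, 'k) ncseries) list
                      \<Rightarrow> 'i \<Rightarrow> ('e, 'k) ncseries" where
  "ext_m m gs j = (\<Sum>is\<in>{is. length is = length gs}.
      nc_mult (nc_prod (rev (map2 (\<lambda>g i. g i) gs is))) (nc_const (m is j)))"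

definition bdy :: "('e::finite \<Rightarrow> 'i) \<Rightarrow> 'i \<Rightarrow> ('e, 'k::field) ncseries" where
  "bdy Xe = (\<lambda>i. \<Sum>e\<in>UNIV. if Xe e = i then nc_var e else 0)"

text \<open>The sum converges x-adically:
  \<open>m_k(b,...,b)\<close> is homogeneous of degree k in the \<open>x_e\<close>, so the coefficient of a word \<open>w\<close>
  only receives contributions from \<open>k = length w\<close>; we sum over \<open>k \<le> length w\<close>.\<close>
definition m0b :: "('i::finite list \<Rightarrow> 'i \<Rightarrow> real \<Rightarrow> 'k::field) \<Rightarrow> ('e::finite \<Rightarrow> 'i) \<Rightarrow> 'i
                   \<Rightarrow> ('e, 'k) ncseries" where
  "m0b m Xe j = (\<lambda>w. (\<Sum>k\<le>length w. ext_m m (replicate k (bdy Xe)) j) w)"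

end

theory Submission
  imports Defs
begin

text \<open>The coefficients of \<open>m\<^sub>0\<^sup>b\<close> are the structure constants of \<open>m\<close> on words in the
  \<open>X\<^sub>e\<close>: the coefficient of the word \<open>x\<^sub>w\<close> in \<open>m0b m Xe j\<close> is the \<open>Y\<^sub>j\<close>-coefficient of
  \<open>m(X\<^bsub>w\<^sub>n\<^esub>, \<dots>, X\<^bsub>w\<^sub>1\<^esub>)\<close>.  Read the \<open>A\<^sub>\<infinity>\<close>-equation with output \<open>X\<^sub>e\<close> on such a word.
  Since all inputs are odd, every sign is \<open>+1\<close> and, for degree reasons, only \<open>1\<close> and the
  \<open>X\<^sub>f\<close> occur as intermediate outputs.  The unit kills every term through \<open>1\<close> except
  \<open>m\<^sub>2(1, \<cdot>)\<close> and \<open>m\<^sub>2(\<cdot>, 1)\<close>, which together give the coefficient of the commutator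
  \<open>x\<^sub>e W - W x\<^sub>e\<close>.  The remaining terms are the coefficient of
  \<open>\<Sum>\<^sub>f \<Sum>\<^sub>\<alpha> x\<^sub>\<alpha> P\<^sub>f G\<^sub>f\<^sub>,\<^sub>\<alpha>\<close>, whose truncations to \<open>|\<alpha>| < N\<close> lie in the ideal generated
  by the \<open>P\<^sub>f\<close> and agree with the commutator on all words of length \<open>< N\<close>.\<close>

lemma sum_fun_apply: "sum F A x = (\<Sum>a\<in>A. F a x)"
  by (induction A rule: infinite_finite_induct) auto

lemma finite_lists_length_less: "finite {xs :: 'a::finite list. length xs < N}"
  by (rule finite_subset[OF _ finite_lists_length_le[of UNIV N]]) auto

lemma sum_triangle_reindex:
  fixes g :: "nat \<Rightarrow> nat \<Rightarrow> 'b::comm_monoid_add"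
  shows "(\<Sum>k\<in>{0..n}. \<Sum>p\<in>{0..n - k}. g k p) = (\<Sum>i\<le>n. \<Sum>a\<le>i. g (i - a) (n - i))"
proof -
  have "(\<Sum>k\<in>{0..n}. \<Sum>p\<in>{0..n - k}. g k p) = (\<Sum>(k, p)\<in>Sigma {0..n} (\<lambda>k. {0..n - k}). g k p)"
    by (rule sum.Sigma) auto
  also have "\<dots> = (\<Sum>(i, a)\<in>Sigma {..n} (\<lambda>i. {..i}). g (i - a) (n - i))"
    by (rule sum.reindex_bij_witness[of _ "\<lambda>(i, a). (i - a, n - i)" "\<lambda>(k, p). (n - p, n - p - k)"])
      (clarsimp; arith)+
  also have "\<dots> = (\<Sum>i\<le>n. \<Sum>a\<le>i. g (i - a) (n - i))"
    by (rule sum.Sigma[symmetric]) auto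
  finally show ?thesis .
qed

lemma take_length_eq_imp_length_le:
  assumes "take (length \<alpha>) w = \<alpha>"
  shows "length \<alpha> \<le> length w"
proof -
  have "length (take (length \<alpha>) w) = length \<alpha>"
    using assms by (rule arg_cong)
  then show ?thesis
    by simp
qed

lemma sum_prefixes:
  fixes F :: "'e::finite list \<Rightarrow> 'b::comm_monoid_add"
  assumes "length \<rho> < N"
  shows "(\<Sum>\<alpha>\<in>{\<alpha>. length \<alpha> < N}. if take (length \<alpha>) \<rho> = \<alpha> then F \<alpha> else 0)
       = (\<Sum>a\<le>length \<rho>. F (take a \<rho>))"
proof -
  have prefixes: "{\<alpha>. length \<alpha> < N} \<inter> {\<alpha>. take (length \<alpha>) \<rho> = \<alpha>} = (\<lambda>a. take a \<rho>) ` {..length \<rho>}"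
  proof (intro equalityI subsetI)
    fix \<alpha> assume "\<alpha> \<in> {\<alpha>. length \<alpha> < N} \<inter> {\<alpha>. take (length \<alpha>) \<rho> = \<alpha>}"
    then have "take (length \<alpha>) \<rho> = \<alpha>" by simp
    moreover from this have "length \<alpha> \<le> length \<rho>"
      by (rule take_length_eq_imp_length_le)
    ultimately show "\<alpha> \<in> (\<lambda>a. take a \<rho>) ` {..length \<rho>}" by force
  qed (use assms in auto)
  have "inj_on (\<lambda>a. take a \<rho>) {..length \<rho>}"
  proof (rule inj_onI)
    fix a b
    assume bounds: "a \<in> {..length \<rho>}" "b \<in> {..length \<rho>}" and "take a \<rho> = take b \<rho>"
    from this(3) have "length (take a \<rho>) = length (take b \<rho>)"
      by (rule arg_cong)
    with bounds show "a = b"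
      by simp
  qed
  then show ?thesis
    by (simp add: sum.inter_filter[symmetric] finite_lists_length_less Collect_conj_eq prefixes
        sum.reindex)
qed

lemma novikov0_zero: "0 \<in> novikov0"
  by (simp add: novikov0_def)

lemma novikov0_one: "nov_one \<in> novikov0"
proof -
  have "{t. t \<le> C \<and> (nov_one t :: 'k::field) \<noteq> 0} \<subseteq> {0}" for C
    by (auto simp: nov_one_def)
  then show ?thesis
    by (auto simp: novikov0_def nov_one_def intro: finite_subset)
qed

lemma novikov0_diff:
  assumes "a \<in> novikov0" "b \<in> novikov0"
  shows "a - b \<in> novikov0"
proof -
  have "{t. t \<le> C \<and> (a - b) t \<noteq> 0} \<subseteq> {t. t \<le> C \<and> a t \<noteq> 0} \<union> {t. t \<le> C \<and> b t \<noteq> 0}" for C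
    by auto
  moreover have "finite ({t. t \<le> C \<and> a t \<noteq> 0} \<union> {t. t \<le> C \<and> b t \<noteq> 0})" for C
    using assms unfolding novikov0_def by auto
  ultimately have "finite {t. t \<le> C \<and> (a - b) t \<noteq> 0}" for C
    by (meson finite_subset)
  then show ?thesis
    using assms unfolding novikov0_def by auto
qed

lemma nov_mult_zero_left [simp]: "nov_mult 0 b = 0"
  by (simp add: nov_mult_def fun_eq_iff)

lemma nov_mult_zero_right [simp]: "nov_mult a 0 = 0"
  by (simp add: nov_mult_def fun_eq_iff)

lemma nov_mult_uminus_right: "nov_mult a (- b) = - nov_mult a b"
  by (simp add: nov_mult_def fun_eq_iff sum_negf)

lemma nov_mult_one_left:
  assumes "a \<in> novikov0"
  shows "nov_mult nov_one a = a"
proof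
  fix t
  have support: "{s. s \<le> t \<and> (nov_one s :: 'a) \<noteq> 0} = (if 0 \<le> t then {0} else {})"
    by (auto simp: nov_one_def)
  show "nov_mult nov_one a t = a t"
  proof (cases "0 \<le> t")
    case True
    then show ?thesis by (simp add: nov_mult_def support nov_one_def)
  next
    case False
    then show ?thesis using assms by (simp add: nov_mult_def support novikov0_def)
  qed
qed

lemma nov_mult_one_right:
  assumes "a \<in> novikov0"
  shows "nov_mult a nov_one = a"
proof
  fix t
  have "finite {s. s \<le> t \<and> a s \<noteq> 0}"
    using assms by (auto simp: novikov0_def)
  moreover have "nov_mult a nov_one t = (\<Sum>s\<in>{s. s \<le> t \<and> a s \<noteq> 0}. if s = t then a s else 0)"
    unfolding nov_mult_def by (intro sum.cong) (auto simp: nov_one_def)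
  ultimately show "nov_mult a nov_one t = a t"
    by (simp add: sum.delta)
qed

lemma nc_mult_zero_left [simp]: "nc_mult 0 g = 0"
  by (simp add: nc_mult_def fun_eq_iff)

lemma nc_mult_const_right: "nc_mult f (nc_const c) w = nov_mult (f w) c"
proof -
  have "nc_mult f (nc_const c) w = (\<Sum>i\<le>length w. if i = length w then nov_mult (f w) c else 0)"
    unfolding nc_mult_def nc_const_def by (intro sum.cong) auto
  then show ?thesis
    by (simp add: sum.delta)
qed

lemma nc_mult_var_left:
  "nc_mult (nc_var e) f w = (if w \<noteq> [] \<and> hd w = e then nov_mult nov_one (f (tl w)) else 0)"
proof -
  have "take i w = [e] \<longleftrightarrow> w \<noteq> [] \<and> i = 1 \<and> hd w = e" if "i \<le> length w" for i
    using that by (cases w; cases i) (auto simp: take_eq_Nil)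
  then have "nc_mult (nc_var e) f w =
      (\<Sum>i\<le>length w. if i = 1 \<and> w \<noteq> [] \<and> hd w = e then nov_mult nov_one (f (tl w)) else 0)"
    unfolding nc_mult_def nc_var_def by (intro sum.cong) (auto simp: drop_Suc)
  then show ?thesis
    by (cases w) (simp_all add: sum.delta Suc_le_eq)
qed

lemma nc_mult_var_right:
  "nc_mult f (nc_var e) w = (if w \<noteq> [] \<and> last w = e then nov_mult (f (butlast w)) nov_one else 0)"
proof -
  have "drop i w = [e] \<longleftrightarrow> w \<noteq> [] \<and> i = length w - 1 \<and> last w = e" if "i \<le> length w" for i
  proof (cases w rule: rev_cases)
    case (snoc v x)
    with that show ?thesis
      by (cases "i \<le> length v") (auto simp: le_Suc_eq)
  qed simp
  then have "nc_mult f (nc_var e) w = (\<Sum>i\<le>length w.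
      if i = length w - 1 \<and> w \<noteq> [] \<and> last w = e then nov_mult (f (butlast w)) nov_one else 0)"
    unfolding nc_mult_def nc_var_def by (intro sum.cong) (auto simp: butlast_conv_take)
  then show ?thesis
    by (simp add: sum.delta)
qed

lemma nc_commutator_var_apply:
  assumes "\<And>w. f w \<in> novikov0"
  shows "nc_mult f (nc_var e) w - nc_mult (nc_var e) f w =
    (if w \<noteq> [] \<and> last w = e then f (butlast w) else 0) - (if w \<noteq> [] \<and> hd w = e then f (tl w) else 0)"
  by (simp add: nc_mult_var_left nc_mult_var_right nov_mult_one_left nov_mult_one_right assms)

definition nc_monomial :: "'e list \<Rightarrow> ('e, 'k::field) ncseries" where
  "nc_monomial \<alpha> = (\<lambda>w. if w = \<alpha> then nov_one else 0)"

lemma nc_monomial_in_nc_series: "nc_monomial \<alpha> \<in> nc_series"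
  by (simp add: nc_series_def nc_monomial_def novikov0_one novikov0_zero)

lemma nc_mult_monomial_left:
  "nc_mult (nc_monomial \<alpha>) f w =
     (if take (length \<alpha>) w = \<alpha> then nov_mult nov_one (f (drop (length \<alpha>) w)) else 0)"
proof -
  let ?c = "if take (length \<alpha>) w = \<alpha> then nov_mult nov_one (f (drop (length \<alpha>) w)) else 0"
  have summand: "nov_mult (nc_monomial \<alpha> (take i w)) (f (drop i w)) = (if i = length \<alpha> then ?c else 0)"
    if "i \<le> length w" for i
  proof (cases "take i w = \<alpha>")
    case True
    moreover from this have "i = length \<alpha>"
      using that by auto
    ultimately show ?thesis
      by (simp add: nc_monomial_def)
  qed (auto simp: nc_monomial_def)
  have "nc_mult (nc_monomial \<alpha>) f w = (\<Sum>i\<le>length w. if i = length \<alpha> then ?c else 0)"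
    unfolding nc_mult_def by (intro sum.cong) (simp_all add: summand)
  also have "\<dots> = ?c"
  proof (cases "take (length \<alpha>) w = \<alpha>")
    case True
    then have "length \<alpha> \<le> length w"
      by (rule take_length_eq_imp_length_le)
    then show ?thesis
      by (simp add: sum.delta)
  qed (simp add: sum.delta)
  finally show ?thesis .
qed

lemma nc_mult_monomial_left_apply:
  assumes "\<And>w. P w \<in> novikov0"
  shows "nc_mult (nc_mult (nc_monomial \<alpha>) P) G w = (\<Sum>i\<le>length w.
     if take (length \<alpha>) (take i w) = \<alpha>
     then nov_mult (P (drop (length \<alpha>) (take i w))) (G (drop i w)) else 0)"
  unfolding nc_mult_def[of "nc_mult (nc_monomial \<alpha>) P"] nc_mult_monomial_left
  by (intro sum.cong) (simp_all add: nov_mult_one_left assms)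

lemma nc_ideal_sum:
  "finite A \<Longrightarrow> (\<And>a. a \<in> A \<Longrightarrow> F a \<in> nc_ideal S) \<Longrightarrow> sum F A \<in> nc_ideal S"
  by (induction A rule: finite_induct) (auto intro: nc_ideal.zero nc_ideal.add)

text \<open>The hypothesis on \<open>g\<close> says that \<open>g = \<Sum>\<^sub>l \<Sum>\<^sub>\<alpha> x\<^sub>\<alpha> P\<^sub>l G\<^sub>l\<^sub>,\<^sub>\<alpha>\<close>, the coefficient of \<open>w\<close>
  collecting the factorisations \<open>w = \<alpha> \<beta> \<gamma>\<close> with \<open>a = |\<alpha>|\<close>, \<open>i = |\<alpha> \<beta>|\<close>; the partial sums
  over \<open>|\<alpha>| < N\<close> lie in the ideal and converge \<open>x\<close>-adically to \<open>g\<close>.\<close>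

lemma factorization_sum_in_nc_closure:
  fixes P :: "'l \<Rightarrow> ('e::finite, 'k::field) ncseries"
    and G :: "'l \<Rightarrow> 'e list \<Rightarrow> ('e, 'k) ncseries"
  assumes L: "finite L"
    and P_ideal: "\<And>l. l \<in> L \<Longrightarrow> P l \<in> nc_ideal S"
    and P_novikov: "\<And>l w. P l w \<in> novikov0"
    and G_series: "\<And>l \<alpha>. G l \<alpha> \<in> nc_series"
    and g_series: "g \<in> nc_series"
    and g_eq: "\<And>w. g w = (\<Sum>l\<in>L. \<Sum>i\<le>length w. \<Sum>a\<le>i.
                   nov_mult (P l (drop a (take i w))) (G l (take a w) (drop i w)))"
  shows "g \<in> nc_closure (nc_ideal S)"
  unfolding nc_closure_def
proof (intro CollectI conjI g_series allI)
  fix N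
  define h where "h = (\<Sum>l\<in>L. \<Sum>\<alpha>\<in>{\<alpha>. length \<alpha> < N}.
      nc_mult (nc_mult (nc_monomial \<alpha>) (P l)) (G l \<alpha>))"
  have "h \<in> nc_ideal S"
    unfolding h_def using L finite_lists_length_less
    by (intro nc_ideal_sum nc_ideal.rmult nc_ideal.lmult P_ideal G_series nc_monomial_in_nc_series)
  moreover have "g w = h w" if "length w < N" for w
  proof -
    have "h w = (\<Sum>l\<in>L. \<Sum>i\<le>length w. \<Sum>\<alpha>\<in>{\<alpha>. length \<alpha> < N}.
          if take (length \<alpha>) (take i w) = \<alpha>
          then nov_mult (P l (drop (length \<alpha>) (take i w))) (G l \<alpha> (drop i w)) else 0)"
      unfolding h_def sum_fun_apply[of _ _ w] nc_mult_monomial_left_apply[OF P_novikov]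
      by (intro sum.cong refl sum.swap)
    also have "\<dots> = g w"
      unfolding g_eq
    proof (intro sum.cong refl)
      fix l i
      assume "i \<in> {..length w}"
      then have i: "length (take i w) = i"
        by simp
      have short: "length (take i w) < N"
        using that by simp
      show "(\<Sum>\<alpha>\<in>{\<alpha>. length \<alpha> < N}. if take (length \<alpha>) (take i w) = \<alpha>
          then nov_mult (P l (drop (length \<alpha>) (take i w))) (G l \<alpha> (drop i w)) else 0)
        = (\<Sum>a\<le>i. nov_mult (P l (drop a (take i w))) (G l (take a w) (drop i w)))"
        unfolding sum_prefixes[OF short] i by (intro sum.cong) (auto simp: min_def)
    qed
    finally show ?thesis ..
  qed
  ultimately show "\<exists>h\<in>nc_ideal S. \<forall>w. length w < N \<longrightarrow> g w = h w"
    by blast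
qed

lemma bdy_eq_nc_var:
  assumes "inj Xe"
  shows "bdy Xe i = (if i \<in> range Xe then nc_var (inv Xe i) else 0)"
proof (cases "i \<in> range Xe")
  case True
  then obtain e where i: "i = Xe e"
    by auto
  have "bdy Xe i = (\<Sum>e'\<in>UNIV. if e' = e then nc_var e' else 0)"
    unfolding bdy_def i using injD[OF assms] by (intro sum.cong) auto
  then show ?thesis
    using i assms by simp
next
  case False
  then show ?thesis
    unfolding bdy_def by (auto intro!: sum.neutral)
qed

lemma nc_prod_map_bdy_apply:
  assumes "inj Xe"
  shows "nc_prod (map (bdy Xe) is) w = (if is = map Xe w then nov_one else 0)"
proof (induction "is" arbitrary: w)
  case Nil
  then show ?case
    by (simp add: nc_prod_def nc_one_def nc_const_def)
next
  case (Cons i "is")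
  have prod: "nc_prod (map (bdy Xe) (i # is)) = nc_mult (bdy Xe i) (nc_prod (map (bdy Xe) is))"
    by (simp add: nc_prod_def)
  show ?case
  proof (cases "i \<in> range Xe")
    case False
    then show ?thesis
      unfolding prod by (cases w) (auto simp: bdy_eq_nc_var[OF assms])
  next
    case True
    then obtain e where i: "i = Xe e"
      by auto
    then have bdy_i: "bdy Xe i = nc_var e"
      using assms by (simp add: bdy_eq_nc_var)
    show ?thesis
      unfolding prod bdy_i nc_mult_var_left Cons.IH using i assms
      by (cases w) (auto simp: nov_mult_one_left[OF novikov0_one] dest: injD)
  qed
qed

lemma map2_apply_replicate: "length is = k \<Longrightarrow> map2 (\<lambda>g i. g i) (replicate k b) is = map b is"
  by (induction "is" arbitrary: k) auto

lemma ext_m_bdy_apply: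
  assumes nov: "structure_constants_in_novikov m" and inj: "inj Xe"
  shows "ext_m m (replicate k (bdy Xe)) j w = (if k = length w then m (rev (map Xe w)) j else 0)"
proof -
  have summand: "nov_mult (nc_prod (rev (map2 (\<lambda>g i. g i) (replicate k (bdy Xe)) is)) w) (m is j) =
      (if is = rev (map Xe w) then m is j else 0)" if "length is = k" for "is"
    unfolding map2_apply_replicate[OF that] rev_map nc_prod_map_bdy_apply[OF inj]
    using nov by (auto simp: structure_constants_in_novikov_def nov_mult_one_left rev_swap rev_map)
  have "ext_m m (replicate k (bdy Xe)) j w =
      (\<Sum>is\<in>{is. length is = k}. if is = rev (map Xe w) then m is j else 0)"
    unfolding ext_m_def sum_fun_apply[of _ _ w] nc_mult_const_right
    by (intro sum.cong) (simp_all add: summand)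
  then show ?thesis
    by (auto simp: sum.delta finite_list_length)
qed

lemma m0b_apply:
  assumes "structure_constants_in_novikov m" and "inj Xe"
  shows "m0b m Xe j w = m (rev (map Xe w)) j"
  unfolding m0b_def sum_fun_apply[of _ _ w] ext_m_bdy_apply[OF assms]
  by (simp add: sum.delta)

lemma degree_one_odd_output_vanishes:
  assumes "degree_one isodd m" and "\<forall>v\<in>set vs. isodd v" and "isodd l"
  shows "m vs l = 0"
proof -
  have inputs: "(\<Sum>v\<leftarrow>vs. sdeg isodd v) = 0"
    using assms(2) by (auto simp: sum_list_eq_0_iff sdeg_def)
  have "odd (sdeg isodd l + (\<Sum>v\<leftarrow>vs. sdeg isodd v) + 1)"
    unfolding inputs using assms(3) by (simp add: sdeg_def)
  then show ?thesis
    using assms(1) unfolding degree_one_def by blast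
qed

definition ainf_composite ::
  "('i list \<Rightarrow> 'i \<Rightarrow> real \<Rightarrow> 'k::field) \<Rightarrow> 'i list \<Rightarrow> nat \<Rightarrow> nat \<Rightarrow> 'i \<Rightarrow> 'i \<Rightarrow> real \<Rightarrow> 'k" where
  "ainf_composite m vs k p l j =
     nov_mult (m (take k (drop p vs)) l) (m (take p vs @ [l] @ drop (p + k) vs) j)"

lemma ainf_equation_odd_word:
  assumes eq: "ainf_equations isodd m" and deg: "degree_one isodd m"
    and shape: "basis_shape isodd u Xe Xf" and vs: "set vs \<subseteq> range Xe"
  shows "(\<Sum>k\<in>{0..length vs}. \<Sum>p\<in>{0..length vs - k}. ainf_composite m vs k p u j) +
         (\<Sum>k\<in>{0..length vs}. \<Sum>p\<in>{0..length vs - k}. \<Sum>l\<in>range Xf. ainf_composite m vs k p l j) = 0"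
proof -
  have odd_vs: "\<forall>v\<in>set vs. isodd v"
    using vs shape by (auto simp: basis_shape_def)
  have u_Xf: "u \<notin> range Xf"
    using shape by (auto simp: basis_shape_def)
  have sign: "nov_sign (\<Sum>q<p. sdeg isodd (vs ! q)) x = x" if "p \<le> length vs" for p x
    using that odd_vs by (simp add: nov_sign_def sdeg_def)
  have intermediates: "(\<Sum>l\<in>UNIV. ainf_composite m vs k p l j) =
      ainf_composite m vs k p u j + (\<Sum>l\<in>range Xf. ainf_composite m vs k p l j)" for k p
  proof -
    have "set (take k (drop p vs)) \<subseteq> set vs"
      by (meson set_drop_subset set_take_subset subset_trans)
    then have odd_inner: "\<forall>v\<in>set (take k (drop p vs)). isodd v"
      using odd_vs by blast
    have "isodd l" if "l \<noteq> u" "l \<notin> range Xf" for l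
      using that shape by (auto simp: basis_shape_def)
    then have "ainf_composite m vs k p l j = 0" if "l \<noteq> u" "l \<notin> range Xf" for l
      using that degree_one_odd_output_vanishes[OF deg odd_inner] by (simp add: ainf_composite_def)
    then have "(\<Sum>l\<in>UNIV. ainf_composite m vs k p l j) =
        (\<Sum>l\<in>insert u (range Xf). ainf_composite m vs k p l j)"
      by (intro sum.mono_neutral_right) auto
    then show ?thesis
      using u_Xf by simp
  qed
  have "(\<Sum>k\<in>{0..length vs}. \<Sum>p\<in>{0..length vs - k}. nov_sign (\<Sum>q<p. sdeg isodd (vs ! q))
          (\<Sum>l\<in>UNIV. ainf_composite m vs k p l j)) = 0"
    using eq unfolding ainf_equations_def ainf_composite_def by blast
  then have "(\<Sum>k\<in>{0..length vs}. \<Sum>p\<in>{0..length vs - k}.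
      ainf_composite m vs k p u j + (\<Sum>l\<in>range Xf. ainf_composite m vs k p l j)) = 0"
    by (simp add: sign intermediates)
  then show ?thesis
    by (simp add: sum.distrib)
qed

text \<open>Through the unit only \<open>m\<^sub>2(1, \<cdot>)\<close> and \<open>m\<^sub>2(\<cdot>, 1)\<close> survive; on an odd input the second
  one carries the sign \<open>-1\<close>.\<close>

lemma ainf_unit_composites:
  fixes m :: "'i::finite list \<Rightarrow> 'i \<Rightarrow> real \<Rightarrow> 'k::field" and Xe :: "'e \<Rightarrow> 'i"
  assumes nov: "structure_constants_in_novikov m" and unit: "ainf_unit isodd m u"
    and inj: "inj Xe" and odd: "\<And>e. isodd (Xe e)"
  shows "(\<Sum>k\<in>{0..length w}. \<Sum>p\<in>{0..length w - k}. ainf_composite m (rev (map Xe w)) k p u (Xe e))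
   = (if w \<noteq> [] \<and> hd w = e then m (rev (map Xe (tl w))) u else 0)
     - (if w \<noteq> [] \<and> last w = e then m (rev (map Xe (butlast w))) u else 0)"
proof -
  define vs where "vs = rev (map Xe w)"
  define n where "n = length w"
  have unit_left: "m [u, i] j = (if i = j then nov_one else 0)" for i j
    using unit by (simp add: ainf_unit_def)
  have unit_right: "m [Xe a, u] j = - (if Xe a = j then nov_one else 0)" for a j
  proof -
    have "nov_sign 1 (m [Xe a, u] j) = (if Xe a = j then nov_one else 0)"
      using unit odd[of a] unfolding ainf_unit_def by (metis (full_types))
    then have "- m [Xe a, u] j = (if Xe a = j then nov_one else 0)"
      by (simp add: nov_sign_def)
    then show ?thesis
      by (metis minus_minus)
  qed
  have m_novikov: "m is j \<in> novikov0" for "is" j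
    using nov by (simp add: structure_constants_in_novikov_def)
  have vanish: "ainf_composite m vs k p u (Xe e) = 0" if "k \<le> n" "p \<le> n - k" "k + 1 \<noteq> n" for k p
  proof -
    have "length (take p vs @ [u] @ drop (p + k) vs) \<noteq> 2"
      using that by (auto simp: vs_def n_def)
    then show ?thesis
      using unit by (simp add: ainf_composite_def ainf_unit_def)
  qed
  show ?thesis
  proof (cases "w = []")
    case True
    then show ?thesis
      using vanish[of 0 0] by (simp add: vs_def n_def)
  next
    case False
    then have n: "n \<ge> 1"
      by (simp add: n_def Suc_le_eq)
    have "(\<Sum>k\<in>{0..n}. \<Sum>p\<in>{0..n - k}. ainf_composite m vs k p u (Xe e))
        = (\<Sum>k\<in>{0..n}. if k = n - 1 then (\<Sum>p\<in>{0..1}. ainf_composite m vs k p u (Xe e)) else 0)"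
      using n vanish by (intro sum.cong refl) auto
    also have "\<dots> = ainf_composite m vs (n - 1) 0 u (Xe e) + ainf_composite m vs (n - 1) 1 u (Xe e)"
      using n by (simp add: sum.delta)
    also have "ainf_composite m vs (n - 1) 0 u (Xe e) = (if hd w = e then m (rev (map Xe (tl w))) u else 0)"
    proof -
      obtain a w' where w: "w = a # w'"
        using False by (cases w) auto
      then have slices: "take (n - 1) vs = rev (map Xe w')" "drop (0 + (n - 1)) vs = [Xe a]"
        by (simp_all add: vs_def n_def)
      show ?thesis
        unfolding ainf_composite_def drop_0 slices using inj m_novikov
        by (auto simp: unit_left w nov_mult_one_right dest: injD)
    qed
    also have "ainf_composite m vs (n - 1) 1 u (Xe e) =
        - (if last w = e then m (rev (map Xe (butlast w))) u else 0)"
    proof -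
      obtain z w' where w: "w = w' @ [z]"
        using False by (cases w rule: rev_cases) auto
      then have slices: "take (n - 1) (drop 1 vs) = rev (map Xe w')" "take 1 vs = [Xe z]"
        "drop (1 + (n - 1)) vs = []"
        by (simp_all add: vs_def n_def)
      show ?thesis
        unfolding ainf_composite_def slices using inj m_novikov
        by (auto simp: unit_right w nov_mult_one_right nov_mult_uminus_right dest: injD)
    qed
    finally show ?thesis
      using False by (auto simp: vs_def n_def fun_eq_iff)
  qed
qed

lemma take_drop_rev_map:
  assumes "a \<le> i" "i \<le> length w"
  shows "take (i - a) (rev (map f (take i w))) = rev (map f (drop a (take i w)))"
    and "take (length w - i) (rev (map f w)) = rev (map f (drop i w))"
    and "drop (length w - a) (rev (map f w)) = rev (map f (take a w))"
proof -
  show "take (i - a) (rev (map f (take i w))) = rev (map f (drop a (take i w)))"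
    using assms by (simp add: take_rev drop_map)
  show "take (length w - i) (rev (map f w)) = rev (map f (drop i w))"
    using assms by (simp add: take_rev drop_map)
  show "drop (length w - a) (rev (map f w)) = rev (map f (take a w))"
    using assms by (simp add: drop_rev take_map)
qed

text \<open>The \<open>A\<^sub>\<infinity>\<close>-equation with output \<open>X\<^sub>e\<close> on the word \<open>w\<close>, reindexed by the factorisation
  \<open>w = \<alpha> \<beta> \<gamma>\<close> (\<open>a = |\<alpha>|\<close>, \<open>i = |\<alpha> \<beta>|\<close>) with \<open>\<beta>\<close> the inputs of the inner operation.\<close>

lemma m0b_commutator_expansion:
  fixes m :: "'i::finite list \<Rightarrow> 'i \<Rightarrow> real \<Rightarrow> 'k::field" and Xe :: "'e::finite \<Rightarrow> 'i"
  assumes ainf: "Z2_filtered_Ainf_algebra isodd m" and unit: "ainf_unit isodd m u"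
    and shape: "basis_shape isodd u Xe Xf"
  shows "nc_mult (m0b m Xe u) (nc_var e) w - nc_mult (nc_var e) (m0b m Xe u) w =
    (\<Sum>l\<in>range Xf. \<Sum>i\<le>length w. \<Sum>a\<le>i. nov_mult (m0b m Xe l (drop a (take i w)))
       (m (rev (map Xe (drop i w)) @ [l] @ rev (map Xe (take a w))) (Xe e)))"
proof -
  have nov: "structure_constants_in_novikov m"
    using ainf by (simp add: Z2_filtered_Ainf_algebra_def)
  have inj: "inj Xe" and odd: "\<And>e. isodd (Xe e)"
    using shape by (simp_all add: basis_shape_def)
  define vs where "vs = rev (map Xe w)"
  have "(\<Sum>k\<in>{0..length w}. \<Sum>p\<in>{0..length w - k}. ainf_composite m vs k p u (Xe e)) +
        (\<Sum>k\<in>{0..length w}. \<Sum>p\<in>{0..length w - k}. \<Sum>l\<in>range Xf. ainf_composite m vs k p l (Xe e)) = 0"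
    using ainf_equation_odd_word[of isodd m u Xe Xf vs] ainf shape
    by (auto simp: vs_def Z2_filtered_Ainf_algebra_def)
  moreover have "(\<Sum>k\<in>{0..length w}. \<Sum>p\<in>{0..length w - k}. ainf_composite m vs k p u (Xe e)) =
      - (nc_mult (m0b m Xe u) (nc_var e) w - nc_mult (nc_var e) (m0b m Xe u) w)"
    unfolding vs_def ainf_unit_composites[OF nov unit inj odd]
    using nov
    by (simp add: nc_commutator_var_apply m0b_apply[OF nov inj] structure_constants_in_novikov_def)
  ultimately have "nc_mult (m0b m Xe u) (nc_var e) w - nc_mult (nc_var e) (m0b m Xe u) w =
      (\<Sum>k\<in>{0..length w}. \<Sum>p\<in>{0..length w - k}. \<Sum>l\<in>range Xf. ainf_composite m vs k p l (Xe e))"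
    by (simp add: add_eq_0_iff)
  also have "\<dots> = (\<Sum>i\<le>length w. \<Sum>a\<le>i. \<Sum>l\<in>range Xf.
      ainf_composite m vs (i - a) (length w - i) l (Xe e))"
    by (rule sum_triangle_reindex)
  also have "\<dots> = (\<Sum>l\<in>range Xf. \<Sum>i\<le>length w. \<Sum>a\<le>i. nov_mult (m0b m Xe l (drop a (take i w)))
       (m (rev (map Xe (drop i w)) @ [l] @ rev (map Xe (take a w))) (Xe e)))"
    unfolding sum.swap[of _ "range Xf"]
    by (intro sum.cong refl)
      (simp add: ainf_composite_def vs_def take_drop_rev_map m0b_apply[OF nov inj])
  finally show ?thesis .
qed

theorem theorem3p8:
  fixes m :: "'i::finite list \<Rightarrow> 'i \<Rightarrow> real \<Rightarrow> 'k::field"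
    and isodd :: "'i \<Rightarrow> bool"
    and u :: 'i
    and Xe :: "'e::finite \<Rightarrow> 'i"
    and Xf :: "'f \<Rightarrow> 'i"
    and e :: 'e
  assumes "Z2_filtered_Ainf_algebra isodd m"
    and "ainf_unit isodd m u"
    and "basis_shape isodd u Xe Xf"
  shows "nc_mult (m0b m Xe u) (nc_var e) - nc_mult (nc_var e) (m0b m Xe u)
           \<in> completed_ideal (range (\<lambda>f. m0b m Xe (Xf f)))"
proof -
  have nov: "structure_constants_in_novikov m" and inj: "inj Xe"
    using assms(1,3) by (simp_all add: Z2_filtered_Ainf_algebra_def basis_shape_def)
  have m0b_novikov: "m0b m Xe j w \<in> novikov0" for j w
    using nov by (simp add: m0b_apply[OF nov inj] structure_constants_in_novikov_def)
  have "nc_mult (m0b m Xe u) (nc_var e) - nc_mult (nc_var e) (m0b m Xe u) \<in> nc_series"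
    by (auto simp: nc_series_def nc_commutator_var_apply m0b_novikov novikov0_diff novikov0_zero)
  then show ?thesis
    unfolding completed_ideal_def
    using nov
    by (intro factorization_sum_in_nc_closure[where P = "m0b m Xe" and L = "range Xf"
          and G = "\<lambda>l \<alpha> \<gamma>. m (rev (map Xe \<gamma>) @ [l] @ rev (map Xe \<alpha>)) (Xe e)"])
      (auto simp: m0b_novikov nc_series_def structure_constants_in_novikov_def
        m0b_commutator_expansion[OF assms] intro: nc_ideal.gen)
qed

end
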